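(* Let $C=2$, $k_1,k_2\ge 1$, and let $w^*_{1,1},\dots,w^*_{1,k_1},w^*_{2,1},\dots,w^*_{2,k_2}\in\mathbb{R}^d/\mathbb{R}\mathbf{1}$. Let $$\mathcal{B}=\{x\in\mathbb{R}^d/\mathbb{R}\mathbf{1}:\ d_{\rm tr}(x,-w^*_{1,i})=d_{\rm tr}(x,-w^*_{2,j})\text{ for some } i\in[k_1],\ j\in[k_2]\}.$$ Then $\mathcal{B}$ contains no full-dimensional cell (i.e. has empty interior in $\mathbb{R}^d/\mathbb{R}\mathbf{1}\cong\mathbb{R}^{d-1}$) if and only if for every $i\in[k_1]$ and $j\in[k_2]$ the pair $w^*_{1,i},w^*_{2,j}$ is in weak general position.
   Context: The tropical projective torus is $\mathbb{R}^d/\mathbb{R}\mathbf{1}$, $\mathbf{1}=(1,\dots,1)$, identified with $\mathbb{R}^{d-1}$ via $x\mapsto(x_2-x_1,\dots,x_d-x_1)$. Tropical metric: $d_{\rm tr}(x,y)=\max_{i}(x_i-y_i)-\min_i(x_i-y_i)$. A tropical ball $B_x(r)=\{y:d_{\rm tr}(x,y)\le r\}$ is a classical polytope whose facets lie in hyperplanes of the form $\{y: y_a-y_b=\text{const}\}$, $a\ne b$. A pair of points $p,q\in\mathbb{R}^d/\mathbb{R}\mathbf{1}$ is in weak general position (with respect to the tropical ball) if they do not lie in a common hyperplane parallel to a facet of a tropical ball, i.e. $p_a-p_b\neq q_a-q_b$ for all $a\neq b$ in $[d]$. $[k]=\{1,\dots,k\}$. *)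

theory Defs
  imports "HOL-Analysis.Analysis"
begin

text \<open>Points of the tropical projective torus R^d / R1 are represented by
representatives in real^'d; all notions below are invariant under adding
multiples of the all-ones vector.\<close>

definition trop_dist :: "real ^ 'd \<Rightarrow> real ^ 'd \<Rightarrow> real" where
  "trop_dist x y = Max (range (\<lambda>i. x $ i - y $ i)) - Min (range (\<lambda>i. x $ i - y $ i))"

definition weak_general_position :: "real ^ 'd \<Rightarrow> real ^ 'd \<Rightarrow> bool" where
  "weak_general_position p q \<longleftrightarrow> (\<forall>a b. a \<noteq> b \<longrightarrow> p $ a - p $ b \<noteq> q $ a - q $ b)"

text \<open>The set B (as a subset of R^d, i.e. the full preimage of the set in the torus).\<close>
definition bisector_set :: "nat \<Rightarrow> nat \<Rightarrow> (nat \<Rightarrow> real ^ 'd) \<Rightarrow> (nat \<Rightarrow> real ^ 'd) \<Rightarrow> (real ^ 'd) set" where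
  "bisector_set k1 k2 w1 w2 = {x. \<exists>i\<in>{1..k1}. \<exists>j\<in>{1..k2}. trop_dist x (- w1 i) = trop_dist x (- w2 j)}"

end

theory Submission
  imports Defs
begin

text \<open>The set \<open>\<B>\<close> is a finite union of closed bisectors
\<open>{x. d(x, u) = d(x, v)}\<close>, so it has empty interior iff every bisector does.
Near a generic point, \<open>d(\<cdot>, u)\<close> is the affine function \<open>(y - u)\<^sub>p - (y - u)\<^sub>q\<close>
for one pair of coordinates \<open>p \<noteq> q\<close>. If a bisector contained a ball, two such
affine functions would agree on a smaller ball, which forces them to use the
same pair \<open>p, q\<close> and then \<open>u\<^sub>p - u\<^sub>q = v\<^sub>p - v\<^sub>q\<close>. Conversely, if
\<open>u\<^sub>p - u\<^sub>q = v\<^sub>p - v\<^sub>q\<close>, then far out in the direction \<open>e\<^sub>p - e\<^sub>q\<close> both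
distances are given by the coordinates \<open>p, q\<close> and coincide on a whole ball.\<close>

lemma trop_dist_eq_extremal:
  fixes x y :: "real ^ 'd"
  assumes "\<And>k. x$k - y$k \<le> x$p - y$p" and "\<And>k. x$q - y$q \<le> x$k - y$k"
  shows "trop_dist x y = (x$p - y$p) - (x$q - y$q)"
proof -
  have "Max (range (\<lambda>i. x$i - y$i)) = x$p - y$p"
    by (rule Max_eqI) (use assms(1) in auto)
  moreover have "Min (range (\<lambda>i. x$i - y$i)) = x$q - y$q"
    by (rule Min_eqI) (use assms(2) in auto)
  ultimately show ?thesis
    by (simp add: trop_dist_def)
qed

lemma Max_range_le_Max_range_add:
  fixes f g :: "'a::finite \<Rightarrow> real"
  assumes "\<And>k. f k \<le> g k + c"
  shows "Max (range f) \<le> Max (range g) + c"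
proof -
  have "Max (range f) \<in> range f"
    by (rule Max_in) auto
  then obtain k where "Max (range f) = f k"
    by blast
  also have "\<dots> \<le> g k + c"
    by (rule assms)
  also have "\<dots> \<le> Max (range g) + c"
    by simp
  finally show ?thesis .
qed

lemma Min_range_le_Min_range_add:
  fixes f g :: "'a::finite \<Rightarrow> real"
  assumes "\<And>k. f k \<le> g k + c"
  shows "Min (range f) \<le> Min (range g) + c"
proof -
  have "Min (range g) \<in> range g"
    by (rule Min_in) auto
  then obtain k where "Min (range g) = g k"
    by blast
  moreover have "Min (range f) \<le> f k"
    by simp
  ultimately show ?thesis
    using assms[of k] by linarith
qed

lemma trop_dist_lipschitz: "2-lipschitz_on UNIV (\<lambda>x :: real ^ 'd. trop_dist x z)"
proof (rule lipschitz_onI)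
  fix x y :: "real ^ 'd"
  let ?f = "\<lambda>i. x$i - z$i" and ?g = "\<lambda>i. y$i - z$i"
  have near: "\<bar>x$k - y$k\<bar> \<le> dist x y" for k
    using component_le_norm_cart[of "x - y" k] by (simp add: dist_norm)
  have fg: "?f k \<le> ?g k + dist x y" and gf: "?g k \<le> ?f k + dist x y" for k
    using near[of k] by (auto simp: abs_le_iff)
  show "dist (trop_dist x z) (trop_dist y z) \<le> 2 * dist x y"
    using Max_range_le_Max_range_add[of ?f ?g, OF fg] Max_range_le_Max_range_add[of ?g ?f, OF gf]
      Min_range_le_Min_range_add[of ?f ?g, OF fg] Min_range_le_Min_range_add[of ?g ?f, OF gf]
    unfolding trop_dist_def dist_real_def abs_le_iff by linarith
qed simp

lemma closed_trop_bisector: "closed {x :: real ^ 'd. trop_dist x u = trop_dist x v}"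
  using trop_dist_lipschitz[THEN lipschitz_on_continuous_on]
  by (intro closed_Collect_eq) auto

lemma exists_distinct_argmax_argmin:
  fixes f :: "'a::finite \<Rightarrow> 'b::linorder"
  assumes "CARD('a) \<ge> 2"
  obtains p q where "p \<noteq> q" "\<And>k. f k \<le> f p" "\<And>k. f q \<le> f k"
proof -
  have "Max (range f) \<in> range f" "Min (range f) \<in> range f"
    by (rule Max_in Min_in; simp)+
  then obtain p q where p: "f p = Max (range f)" and q: "f q = Min (range f)"
    by (metis rangeE)
  have max: "f k \<le> f p" and min: "f q \<le> f k" for k
    by (simp_all add: p q)
  show thesis
  proof (cases "p = q")
    case True
    have "UNIV \<noteq> {p}"
    proof
      assume "UNIV = {p}"
      then have "CARD('a) = card {p}"
        by (rule arg_cong)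
      with assms show False
        by simp
    qed
    then obtain q' where "q' \<noteq> p"
      by blast
    moreover have "f q' \<le> f k" for k
      using max[of q'] min[of k] True by simp
    ultimately show thesis
      using that max by metis
  qed (use that max min in blast)
qed

lemma norm_axis_real: "norm (axis i (t :: real)) = \<bar>t\<bar>"
proof -
  have "axis i t = t *\<^sub>R axis i (1 :: real)"
    by (simp add: axis_def vec_eq_iff)
  then show ?thesis
    by simp
qed

lemma trop_dist_on_ball_if_gap:
  fixes x y z :: "real ^ 'd"
  assumes "\<And>k. k \<noteq> p \<Longrightarrow> x$k - z$k + 2 * \<delta> \<le> x$p - z$p"
    and "\<And>k. k \<noteq> q \<Longrightarrow> x$q - z$q + 2 * \<delta> \<le> x$k - z$k"
    and "y \<in> ball x \<delta>"
  shows "trop_dist y z = (y$p - z$p) - (y$q - z$q)"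
proof (rule trop_dist_eq_extremal)
  have near: "\<bar>y$k - x$k\<bar> < \<delta>" for k
    using component_le_norm_cart[of "y - x" k] assms(3) by (simp add: dist_norm norm_minus_commute)
  show "y$k - z$k \<le> y$p - z$p" for k
    using assms(1)[of k] near[of k] near[of p] by (cases "k = p") auto
  show "y$q - z$q \<le> y$k - z$k" for k
    using assms(2)[of k] near[of k] near[of q] by (cases "k = q") auto
qed

lemma trop_dist_affine_near:
  fixes x z :: "real ^ 'd"
  assumes "CARD('d) \<ge> 2" and "e > 0"
  obtains x' \<rho> p q where "\<rho> > 0" "p \<noteq> q" "ball x' \<rho> \<subseteq> ball x e"
    "\<And>y. y \<in> ball x' \<rho> \<Longrightarrow> trop_dist y z = (y$p - z$p) - (y$q - z$q)"
proof -
  obtain p q where pq: "p \<noteq> q"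
    and max: "\<And>k. x$k - z$k \<le> x$p - z$p" and min: "\<And>k. x$q - z$q \<le> x$k - z$k"
    using exists_distinct_argmax_argmin[OF assms(1), of "\<lambda>k. x$k - z$k"] by blast
  define \<delta> where "\<delta> = e / 5"
  have "\<delta> > 0"
    using assms(2) by (simp add: \<delta>_def)
  define x' where "x' = x + axis p (2 * \<delta>) - axis q (2 * \<delta>)"
  have x'_nth: "x'$k = x$k + (if k = p then 2 * \<delta> else 0) - (if k = q then 2 * \<delta> else 0)" for k
    by (simp add: x'_def axis_def)
  have "dist x x' = norm (axis p (2 * \<delta>) - axis q (2 * \<delta>))"
    by (simp add: x'_def dist_norm norm_minus_commute)
  also have "\<dots> \<le> norm (axis p (2 * \<delta>)) + norm (axis q (2 * \<delta>))"
    by (rule norm_triangle_ineq4)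
  finally have "dist x x' \<le> 4 * \<delta>"
    using \<open>\<delta> > 0\<close> by (simp add: norm_axis_real)
  have sub: "ball x' \<delta> \<subseteq> ball x e"
  proof
    fix y assume "y \<in> ball x' \<delta>"
    then have "dist x y < 5 * \<delta>"
      using \<open>dist x x' \<le> 4 * \<delta>\<close> dist_triangle[of x y x'] by simp
    then show "y \<in> ball x e"
      by (simp add: \<delta>_def)
  qed
  have affine: "trop_dist y z = (y$p - z$p) - (y$q - z$q)" if "y \<in> ball x' \<delta>" for y
  proof (rule trop_dist_on_ball_if_gap[OF _ _ that])
    show "x'$k - z$k + 2 * \<delta> \<le> x'$p - z$p" if "k \<noteq> p" for k
      using max[of k] that pq \<open>\<delta> > 0\<close> by (cases "k = q") (simp_all add: x'_nth)
    show "x'$q - z$q + 2 * \<delta> \<le> x'$k - z$k" if "k \<noteq> q" for k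
      using min[of k] that pq \<open>\<delta> > 0\<close> by (cases "k = p") (simp_all add: x'_nth)
  qed
  show thesis
    by (rule that[OF \<open>\<delta> > 0\<close> pq sub affine])
qed

lemma coordinate_differences_eq_on_ball:
  fixes x :: "real ^ 'd"
  assumes "\<rho> > 0" "p \<noteq> q" "r \<noteq> s"
    and eq: "\<And>y. y \<in> ball x \<rho> \<Longrightarrow> y$p - y$q + c = y$r - y$s + c'"
  shows "p = r" "q = s" "c = c'"
proof -
  define t where "t = \<rho> / 2"
  have t: "t > 0"
    using assms(1) by (simp add: t_def)
  have shift: "(if k = p then t else 0) - (if k = q then t else 0) =
      (if k = r then t else 0) - (if k = s then t else 0)" for k
  proof -
    have "x + axis k t \<in> ball x \<rho>"
      using assms(1) by (simp add: dist_norm norm_axis_real t_def)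
    from eq[OF this] eq[of x] show ?thesis
      using assms(1) by (auto simp: axis_def)
  qed
  show "p = r" "q = s"
    using shift[of p] shift[of q] t assms(2,3) by (auto split: if_splits)
  then show "c = c'"
    using eq[of x] assms(1) by simp
qed

lemma interior_trop_bisector_empty_if_wgp:
  fixes u v :: "real ^ 'd"
  assumes "CARD('d) \<ge> 2" and "weak_general_position u v"
  shows "interior {x. trop_dist x u = trop_dist x v} = {}"
proof (rule ccontr)
  assume "interior {x. trop_dist x u = trop_dist x v} \<noteq> {}"
  then obtain x0 where "x0 \<in> interior {x. trop_dist x u = trop_dist x v}"
    by blast
  then obtain e where "e > 0" and ball0: "ball x0 e \<subseteq> {x. trop_dist x u = trop_dist x v}"
    unfolding mem_interior by blast
  obtain x1 \<rho>1 p q where "\<rho>1 > 0" "p \<noteq> q" and ball1: "ball x1 \<rho>1 \<subseteq> ball x0 e"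
    and du: "\<And>y. y \<in> ball x1 \<rho>1 \<Longrightarrow> trop_dist y u = (y$p - u$p) - (y$q - u$q)"
    using trop_dist_affine_near[OF assms(1) \<open>e > 0\<close>, where x = x0 and z = u] by metis
  obtain x2 \<rho>2 r s where "\<rho>2 > 0" "r \<noteq> s" and ball2: "ball x2 \<rho>2 \<subseteq> ball x1 \<rho>1"
    and dv: "\<And>y. y \<in> ball x2 \<rho>2 \<Longrightarrow> trop_dist y v = (y$r - v$r) - (y$s - v$s)"
    using trop_dist_affine_near[OF assms(1) \<open>\<rho>1 > 0\<close>, where x = x1 and z = v] by metis
  have "y$p - y$q + (u$q - u$p) = y$r - y$s + (v$s - v$r)" if y: "y \<in> ball x2 \<rho>2" for y
  proof -
    have "y \<in> ball x1 \<rho>1"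
      using y ball2 by blast
    then have "trop_dist y u = trop_dist y v"
      using ball0 ball1 by blast
    then show ?thesis
      using du[OF \<open>y \<in> ball x1 \<rho>1\<close>] dv[OF y] by simp
  qed
  note coordinate_differences_eq_on_ball[where x = x2, OF \<open>\<rho>2 > 0\<close> \<open>p \<noteq> q\<close> \<open>r \<noteq> s\<close> this]
  then have "u$p - u$q = v$p - v$q"
    by simp
  with assms(2) \<open>p \<noteq> q\<close> show False
    unfolding weak_general_position_def by blast
qed

lemma interior_trop_bisector_nonempty_if_not_wgp:
  fixes u v :: "real ^ 'd"
  assumes "p \<noteq> q" and "u$p - u$q = v$p - v$q"
  shows "interior {x. trop_dist x u = trop_dist x v} \<noteq> {}"
proof -
  define N where "N = norm (u - v)"
  have "N \<ge> 0"
    by (simp add: N_def)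
  define L where "L = 2 * N + 2"
  define x0 where "x0 = u + axis p L - axis q L"
  have x0_nth: "x0$k = u$k + (if k = p then L else 0) - (if k = q then L else 0)" for k
    by (simp add: x0_def axis_def)
  have uv: "\<bar>u$k - v$k\<bar> \<le> N" for k
    using component_le_norm_cart[of "u - v" k] by (simp add: N_def)
  have "ball x0 1 \<subseteq> {x. trop_dist x u = trop_dist x v}"
  proof
    fix y assume y: "y \<in> ball x0 1"
    have "trop_dist y u = (y$p - u$p) - (y$q - u$q)"
      by (rule trop_dist_on_ball_if_gap[OF _ _ y]) (use assms(1) \<open>N \<ge> 0\<close> in \<open>auto simp: x0_nth L_def\<close>)
    moreover have "trop_dist y v = (y$p - v$p) - (y$q - v$q)"
    proof (rule trop_dist_on_ball_if_gap[OF _ _ y])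
      show "x0$k - v$k + 2 * 1 \<le> x0$p - v$p" if "k \<noteq> p" for k
        using that assms(1) uv[of k] uv[of p] by (auto simp: x0_nth L_def abs_le_iff)
      show "x0$q - v$q + 2 * 1 \<le> x0$k - v$k" if "k \<noteq> q" for k
        using that assms(1) uv[of k] uv[of q] by (auto simp: x0_nth L_def abs_le_iff)
    qed
    ultimately show "y \<in> {x. trop_dist x u = trop_dist x v}"
      using assms(2) by simp
  qed
  then have "x0 \<in> interior {x. trop_dist x u = trop_dist x v}"
    by (meson centre_in_ball interior_maximal open_ball zero_less_one subsetD)
  then show ?thesis
    by blast
qed

lemma interior_trop_bisector_eq_empty_iff:
  fixes u v :: "real ^ 'd"
  assumes "CARD('d) \<ge> 2"
  shows "interior {x. trop_dist x u = trop_dist x v} = {} \<longleftrightarrow> weak_general_position u v"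
proof
  assume empty: "interior {x. trop_dist x u = trop_dist x v} = {}"
  show "weak_general_position u v"
    unfolding weak_general_position_def
  proof (intro allI impI)
    fix a b :: 'd
    assume "a \<noteq> b"
    show "u$a - u$b \<noteq> v$a - v$b"
      using interior_trop_bisector_nonempty_if_not_wgp[OF \<open>a \<noteq> b\<close>] empty by metis
  qed
qed (rule interior_trop_bisector_empty_if_wgp[OF assms])

lemma weak_general_position_uminus:
  "weak_general_position (- p) (- q) \<longleftrightarrow> weak_general_position p q"
  by (auto simp: weak_general_position_def)

lemma interior_finite_Union_closed_eq_empty_iff:
  fixes S :: "'i \<Rightarrow> 'a::topological_space set"
  assumes "finite I" and "\<And>i. i \<in> I \<Longrightarrow> closed (S i)"
  shows "interior (\<Union>i\<in>I. S i) = {} \<longleftrightarrow> (\<forall>i\<in>I. interior (S i) = {})"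
proof
  show "\<forall>i\<in>I. interior (S i) = {}" if "interior (\<Union>i\<in>I. S i) = {}"
  proof
    fix i assume "i \<in> I"
    then have "interior (S i) \<subseteq> interior (\<Union>i\<in>I. S i)"
      by (intro interior_mono) blast
    with that show "interior (S i) = {}"
      by blast
  qed
  show "interior (\<Union>i\<in>I. S i) = {}" if "\<forall>i\<in>I. interior (S i) = {}"
    using assms that
  proof (induction I rule: finite_induct)
    case (insert i I)
    then have "interior (S i \<union> (\<Union>i\<in>I. S i)) = interior (S i)"
      by (intro interior_closed_Un_empty_interior) simp_all
    with insert.prems show ?case
      by simp
  qed simp
qed

lemma bisector_set_eq_Union:
  "bisector_set k1 k2 w1 w2 =
    (\<Union>(i, j)\<in>{1..k1} \<times> {1..k2}. {x. trop_dist x (- w1 i) = trop_dist x (- w2 j)})"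
  unfolding bisector_set_def by blast

theorem mainTheorem2:
  fixes k1 k2 :: nat and w1 w2 :: "nat \<Rightarrow> real ^ 'd"
  assumes "CARD('d) \<ge> 2" and "k1 \<ge> 1" and "k2 \<ge> 1"
  shows "interior (bisector_set k1 k2 w1 w2) = {} \<longleftrightarrow>
    (\<forall>i\<in>{1..k1}. \<forall>j\<in>{1..k2}. weak_general_position (w1 i) (w2 j))"
proof -
  have "interior (bisector_set k1 k2 w1 w2) = {} \<longleftrightarrow>
      (\<forall>(i, j)\<in>{1..k1} \<times> {1..k2}. interior {x. trop_dist x (- w1 i) = trop_dist x (- w2 j)} = {})"
    unfolding bisector_set_eq_Union
    using interior_finite_Union_closed_eq_empty_iff[of "{1..k1} \<times> {1..k2}"
        "\<lambda>(i, j). {x. trop_dist x (- w1 i) = trop_dist x (- w2 j)}"]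
    by (simp add: closed_trop_bisector case_prod_unfold)
  also have "\<dots> \<longleftrightarrow> (\<forall>i\<in>{1..k1}. \<forall>j\<in>{1..k2}. weak_general_position (w1 i) (w2 j))"
    by (simp add: interior_trop_bisector_eq_empty_iff[OF assms(1)] weak_general_position_uminus)
  finally show ?thesis .
qed

end
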